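(* Let $H$, $U$, $Y$ be Hilbert spaces, let $A : \mathcal{D}(A) \subset H \to H$ be a skew-adjoint operator on $H$, and let $B \in \mathcal{L}(U,H)$, $C \in \mathcal{L}(H,Y)$, $K \in \mathcal{L}(Y,U)$. Let $\gamma > 0$. Consider the event-triggered closed-loop system $$\dot z(t) = Az(t) + BKCz(t_k), \quad t \in [t_k, t_{k+1}),\ k \in \mathbb{N}, \qquad z(0) = z_0,$$ with $t_0 = 0$ and update law $$t_{k+1} = \sup\big\{ t > t_k : \forall \tau \in [t_k, t),\ \|Cz(\tau) - Cz(t_k)\|_Y^2 \leq \gamma^2 \|z(\tau)\|_H^2 \big\},$$ and let $T^* = +\infty$ if the sequence $(t_k)$ is finite and $T^* = \limsup_{k\to\infty} t_k$ otherwise, $z \in \mathcal{C}([0,T^* );H)$ being the associated mild (Duhamel) solution. If $z_0 \in \mathcal{D}(A)$, then $T^* = +\infty$; in particular the sequence $(t_k)$ has no finite accumulation point (no Zeno phenomenon).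
   Context: $\mathcal{L}(X,Z)$ denotes bounded linear operators from $X$ to $Z$. *)

theory Defs
  imports "HOL-Analysis.Analysis"
begin

definition adj_domain :: "'h::real_inner set \<Rightarrow> ('h \<Rightarrow> 'h) \<Rightarrow> 'h set" where
  "adj_domain D A = {y. \<exists>w. \<forall>x\<in>D. inner (A x) y = inner x w}"

definition adj :: "'h::real_inner set \<Rightarrow> ('h \<Rightarrow> 'h) \<Rightarrow> 'h \<Rightarrow> 'h" where
  "adj D A y = (THE w. \<forall>x\<in>D. inner (A x) y = inner x w)"

definition skew_adjoint :: "'h::real_inner set \<Rightarrow> ('h \<Rightarrow> 'h) \<Rightarrow> bool" where
  "skew_adjoint D A \<longleftrightarrow> subspace D \<and> closure D = UNIV \<and>
     (\<forall>x\<in>D. \<forall>y\<in>D. A (x + y) = A x + A y) \<and>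
     (\<forall>c. \<forall>x\<in>D. A (c *\<^sub>R x) = c *\<^sub>R A x) \<and>
     adj_domain D A = D \<and> (\<forall>y\<in>D. adj D A y = - A y)"

definition c0_semigroup :: "(real \<Rightarrow> 'h::real_normed_vector \<Rightarrow> 'h) \<Rightarrow> bool" where
  "c0_semigroup T \<longleftrightarrow> (\<forall>t\<ge>0. bounded_linear (T t)) \<and> T 0 = id \<and>
     (\<forall>s\<ge>0. \<forall>t\<ge>0. T (s + t) = T s \<circ> T t) \<and>
     (\<forall>x. continuous_on {0..} (\<lambda>t. T t x))"

definition generator :: "(real \<Rightarrow> 'h::real_normed_vector \<Rightarrow> 'h) \<Rightarrow> 'h set \<Rightarrow> ('h \<Rightarrow> 'h) \<Rightarrow> bool" where
  "generator T D A \<longleftrightarrow>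
     D = {x. \<exists>y. ((\<lambda>h. (1 / h) *\<^sub>R (T h x - x)) \<longlongrightarrow> y) (at_right 0)} \<and>
     (\<forall>x\<in>D. ((\<lambda>h. (1 / h) *\<^sub>R (T h x - x)) \<longlongrightarrow> A x) (at_right 0))"

definition duhamel :: "(real \<Rightarrow> 'h::real_normed_vector \<Rightarrow> 'h) \<Rightarrow> 'h \<Rightarrow> real \<Rightarrow> 'h \<Rightarrow> real \<Rightarrow> 'h" where
  "duhamel T f a x \<tau> = T (\<tau> - a) x + integral {a..\<tau>} (\<lambda>r. T (\<tau> - r) f)"

text \<open>Maximal time: +infinity if the sequence of triggering times is finite
  (encoded by some t k = infinity), limsup otherwise.\<close>
definition Tstar :: "(nat \<Rightarrow> ereal) \<Rightarrow> ereal" where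
  "Tstar t = (if \<exists>k. t k = \<infinity> then \<infinity> else limsup t)"

end

theory Submission
  imports Defs
begin

(* Skew-adjointness makes the semigroup isometric: the right derivative of |T t x|^2 is
   2 <A T t x, T t x> = 0 on the domain, which is dense.  Between two triggering instants
   t_k < t_(k+1) the state follows the flow z(t_k + s) = T s z_k + integral_0^s T r (F z_k) dr
   with F = B K C, and at t_(k+1) the triggering condition fails:
   gamma |z_(k+1)| <= |C z_(k+1) - C z_k|.  If T* were finite, the sampling intervals
   h_k = t_(k+1) - t_k would be summable.  Because z0 lies in the domain, the flow leaves z0
   at a Lipschitz rate, and each restart multiplies that rate by at most 1 + |F| h_k; hence
   |z_(k+1) - z_k| <= M h_k with M bounded by exp (|F| * sum h_k).  On the other hand
   |z_(k+1)| >= (1 - |F| h_k) |z_k| keeps |z_k| away from 0.  So gamma m <= |C| M h_k for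
   large k, which contradicts h_k --> 0. *)

section \<open>Integrals with values in a complete normed space\<close>

(* The Henstock-Kurzweil library asks for the sort banach, which the sort
   {real_normed_vector, complete_space} of the statement does not entail.  A copy of the type
   is made an instance of banach, and integrals are transferred along Abs_as_banach. *)
typedef 'a as_banach = "UNIV :: 'a set" by simp

setup_lifting type_definition_as_banach

instantiation as_banach :: (real_vector) real_vector
begin
lift_definition zero_as_banach :: "'a as_banach" is 0 .
lift_definition plus_as_banach :: "'a as_banach \<Rightarrow> 'a as_banach \<Rightarrow> 'a as_banach" is "(+)" .
lift_definition minus_as_banach :: "'a as_banach \<Rightarrow> 'a as_banach \<Rightarrow> 'a as_banach" is "(-)" .
lift_definition uminus_as_banach :: "'a as_banach \<Rightarrow> 'a as_banach" is uminus .
lift_definition scaleR_as_banach :: "real \<Rightarrow> 'a as_banach \<Rightarrow> 'a as_banach" is scaleR .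
instance by standard (transfer; simp add: algebra_simps)+
end

instantiation as_banach :: (real_normed_vector) real_normed_vector
begin
lift_definition norm_as_banach :: "'a as_banach \<Rightarrow> real" is norm .
definition sgn_as_banach :: "'a as_banach \<Rightarrow> 'a as_banach"
  where "sgn_as_banach x = x /\<^sub>R norm x"
definition dist_as_banach :: "'a as_banach \<Rightarrow> 'a as_banach \<Rightarrow> real"
  where "dist_as_banach x y = norm (x - y)"
definition uniformity_as_banach :: "('a as_banach \<times> 'a as_banach) filter"
  where "uniformity_as_banach = (INF e\<in>{0<..}. principal {(x, y). dist x y < e})"
definition open_as_banach :: "'a as_banach set \<Rightarrow> bool"
  where "open_as_banach U = (\<forall>x\<in>U. \<forall>\<^sub>F (x', y) in uniformity. x' = x \<longrightarrow> y \<in> U)"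
instance
  by standard (simp add: sgn_as_banach_def dist_as_banach_def uniformity_as_banach_def
      open_as_banach_def | transfer, simp add: norm_triangle_ineq)+
end

lemma bounded_linear_Rep_as_banach: "bounded_linear Rep_as_banach"
  by (rule bounded_linear_intro[where K=1]; transfer) simp_all

lemma bounded_linear_Abs_as_banach: "bounded_linear Abs_as_banach"
  by (rule bounded_linear_intro[where K=1]; transfer) simp_all

instance as_banach :: ("{real_normed_vector, complete_space}") banach
proof
  fix X :: "nat \<Rightarrow> 'a as_banach"
  assume "Cauchy X"
  then have "Cauchy (\<lambda>n. Rep_as_banach (X n))"
    by (rule bounded_linear.Cauchy[OF bounded_linear_Rep_as_banach])
  then obtain L where "(\<lambda>n. Rep_as_banach (X n)) \<longlonglongrightarrow> L"
    by (auto simp: Cauchy_convergent_iff convergent_def)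
  then have "X \<longlonglongrightarrow> Abs_as_banach L"
    using bounded_linear.tendsto[OF bounded_linear_Abs_as_banach] by (fastforce simp: Rep_as_banach_inverse)
  then show "convergent X" by (auto simp: convergent_def)
qed

lemma has_integral_as_banach_iff:
  "((\<lambda>x. Abs_as_banach (f x)) has_integral Abs_as_banach i) S \<longleftrightarrow> (f has_integral i) S"
  using has_integral_linear[OF _ bounded_linear_Abs_as_banach, of f i S]
    has_integral_linear[OF _ bounded_linear_Rep_as_banach, of "\<lambda>x. Abs_as_banach (f x)" "Abs_as_banach i" S]
  by (auto simp: o_def Abs_as_banach_inverse)

lemma integrable_continuous_interval_complete:
  fixes f :: "real \<Rightarrow> 'a::{real_normed_vector, complete_space}"
  assumes "continuous_on {a..b} f"
  shows "f integrable_on {a..b}"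
proof -
  have "continuous_on {a..b} (\<lambda>x. Abs_as_banach (f x))"
    using linear_continuous_on[OF bounded_linear_Abs_as_banach] assms by (rule continuous_on_compose2) auto
  then obtain i where "((\<lambda>x. Abs_as_banach (f x)) has_integral i) {a..b}"
    using integrable_continuous_interval by blast
  then show ?thesis
    by (metis Rep_as_banach_inverse has_integral_as_banach_iff integrable_on_def)
qed

lemma has_integral_combine_complete:
  fixes f :: "real \<Rightarrow> 'a::{real_normed_vector, complete_space}"
  assumes "a \<le> c" "c \<le> b" "(f has_integral i) {a..c}" "(f has_integral j) {c..b}"
  shows "(f has_integral (i + j)) {a..b}"
  using has_integral_combine[OF assms(1,2), of "\<lambda>x. Abs_as_banach (f x)" "Abs_as_banach i" "Abs_as_banach j"]
    assms(3,4)
  by (simp add: has_integral_as_banach_iff plus_as_banach.abs_eq)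

section \<open>Real functions with vanishing right derivative\<close>

lemma le_if_eventually_decreasing_at_right:
  fixes g :: "real \<Rightarrow> real"
  assumes "a \<le> b" and cont: "continuous_on {a..b} g"
    and decr: "\<And>t. t \<in> {a..<b} \<Longrightarrow> \<forall>\<^sub>F h in at_right 0. g (t + h) < g t"
  shows "g b \<le> g a"
proof (rule ccontr)
  assume "\<not> g b \<le> g a"
  define Z where "Z = {u \<in> {a..b}. g a < g u}"
  define s where "s = Inf Z"
  have "b \<in> Z" using \<open>a \<le> b\<close> \<open>\<not> g b \<le> g a\<close> by (simp add: Z_def)
  have s_le: "s \<le> u" if "u \<in> Z" for u
    unfolding s_def by (rule cInf_lower[OF that]) (auto simp: Z_def intro: bdd_belowI)
  have "a \<le> s" unfolding s_def using \<open>b \<in> Z\<close> by (intro cInf_greatest) (auto simp: Z_def)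
  have "s \<le> b" using s_le[OF \<open>b \<in> Z\<close>] .
  show False
  proof (cases "g s \<le> g a")
    case True
    then have "s \<in> {a..<b}"
      using \<open>a \<le> s\<close> \<open>s \<le> b\<close> \<open>b \<in> Z\<close> by (cases "s = b") (auto simp: Z_def)
    then obtain d where "d > 0" and d: "\<And>h. 0 < h \<Longrightarrow> h < d \<Longrightarrow> g (s + h) < g s"
      using decr by (auto simp: eventually_at_right_field)
    have "s + d \<le> Inf Z"
    proof (rule cInf_greatest)
      show "Z \<noteq> {}" using \<open>b \<in> Z\<close> by blast
      fix u assume "u \<in> Z"
      then have "g s < g u" using True by (simp add: Z_def)
      then have "s < u" using s_le[OF \<open>u \<in> Z\<close>] by (cases "u = s") auto
      show "s + d \<le> u"
        using d[of "u - s"] \<open>s < u\<close> \<open>u \<in> Z\<close> True by (force simp: Z_def)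
    qed
    then show False using \<open>d > 0\<close> by (simp add: s_def)
  next
    case False
    then have "a < s" using \<open>a \<le> s\<close> by (cases "a = s") auto
    have "(g \<longlongrightarrow> g s) (at s within {a..b})"
      using cont \<open>a \<le> s\<close> \<open>s \<le> b\<close> by (simp add: continuous_on_def)
    then have "\<forall>\<^sub>F u in at s within {a..b}. g a < g u"
      using False by (intro order_tendstoD) auto
    then obtain d where "d > 0"
      and d: "\<And>u. u \<in> {a..b} \<Longrightarrow> u \<noteq> s \<Longrightarrow> dist u s < d \<Longrightarrow> g a < g u"
      by (auto simp: eventually_at)
    define u where "u = max a (s - d / 2)"
    have "u \<in> Z" "u < s"
      using d[of u] \<open>d > 0\<close> \<open>a < s\<close> \<open>s \<le> b\<close> by (auto simp: u_def Z_def dist_real_def)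
    then show False using s_le by force
  qed
qed

lemma right_derivative_zero_imp_constant:
  fixes g :: "real \<Rightarrow> real"
  assumes "a \<le> b" and cont: "continuous_on {a..b} g"
    and deriv: "\<And>t. t \<in> {a..<b} \<Longrightarrow> ((\<lambda>h. (g (t + h) - g t) / h) \<longlongrightarrow> 0) (at_right 0)"
  shows "g b = g a"
proof -
  have le: "g b \<le> g a"
    if cont: "continuous_on {a..b} g"
      and deriv: "\<And>t. t \<in> {a..<b} \<Longrightarrow> ((\<lambda>h. (g (t + h) - g t) / h) \<longlongrightarrow> 0) (at_right 0)"
    for g :: "real \<Rightarrow> real"
  proof -
    have "\<forall>\<^sub>F e in at_right 0. g b - g a \<le> e * (b - a)"
      using eventually_at_right_less[of 0]
    proof eventually_elim
      case (elim e)
      have "(\<lambda>u. g u - e * u) b \<le> (\<lambda>u. g u - e * u) a"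
      proof (rule le_if_eventually_decreasing_at_right[OF \<open>a \<le> b\<close>])
        show "continuous_on {a..b} (\<lambda>u. g u - e * u)" by (intro continuous_intros cont)
        fix t assume "t \<in> {a..<b}"
        have "\<forall>\<^sub>F h in at_right 0. (g (t + h) - g t) / h < e"
          using deriv[OF \<open>t \<in> {a..<b}\<close>] elim by (rule order_tendstoD)
        then show "\<forall>\<^sub>F h in at_right 0. g (t + h) - e * (t + h) < g t - e * t"
          by (auto simp: eventually_at_right_field divide_less_eq algebra_simps)
      qed
      then show ?case by (simp add: algebra_simps)
    qed
    then have "g b - g a \<le> 0"
      by (rule tendsto_le[OF trivial_limit_at_right_real _ tendsto_const, rotated])
         (auto intro!: tendsto_eq_intros)
    then show ?thesis by simp
  qed
  have "- g b \<le> - g a"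
  proof (rule le)
    show "continuous_on {a..b} (\<lambda>x. - g x)" by (intro continuous_intros cont)
    fix t assume "t \<in> {a..<b}"
    from tendsto_minus[OF deriv[OF this]]
    show "((\<lambda>h. (- g (t + h) - - g t) / h) \<longlongrightarrow> 0) (at_right 0)"
      by (simp add: minus_divide_left)
  qed
  with le[OF cont deriv] show ?thesis by simp
qed

lemma exp_neg_two_le_one_minus:
  fixes x :: real
  assumes "0 \<le> x" "x \<le> 1 / 2"
  shows "exp (- 2 * x) \<le> 1 - x"
proof -
  have "0 \<le> x * (1 - 2 * x)" using assms by simp
  then have "1 \<le> (1 - x) * (1 + 2 * x)" by (simp add: algebra_simps)
  also have "\<dots> \<le> (1 - x) * exp (2 * x)"
    using assms exp_ge_add_one_self[of "2 * x"] by (intro mult_left_mono) auto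
  finally show ?thesis by (simp add: exp_minus field_simps)
qed

lemma eventually_bounded_below_if_summable_losses:
  fixes a h :: "nat \<Rightarrow> real"
  assumes pos: "\<And>k. 0 < a k" and loss: "\<And>k. a k * (1 - h k) \<le> a (Suc k)"
    and h: "\<And>k. 0 \<le> h k" "summable h"
  shows "\<exists>m>0. \<forall>\<^sub>F k in sequentially. m \<le> a k"
proof -
  have "\<forall>\<^sub>F k in sequentially. h k < 1 / 2"
    using summable_LIMSEQ_zero[OF h(2)] by (rule order_tendstoD) simp
  then obtain N where N: "\<And>k. N \<le> k \<Longrightarrow> h k < 1 / 2"
    by (auto simp: eventually_sequentially)
  have decay: "a N * exp (- 2 * (\<Sum>j\<in>{N..<k}. h j)) \<le> a k" if "N \<le> k" for k
    using that
  proof (induction k rule: dec_induct)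
    case (step k)
    have "a N * exp (- 2 * (\<Sum>j\<in>{N..<Suc k}. h j))
        = a N * exp (- 2 * (\<Sum>j\<in>{N..<k}. h j)) * exp (- 2 * h k)"
      using step.hyps by (simp add: algebra_simps exp_add[symmetric])
    also have "\<dots> \<le> a k * (1 - h k)"
      using step.IH N[OF step.hyps(1)] h(1)[of k] pos[of k]
      by (intro mult_mono exp_neg_two_le_one_minus) auto
    also have "\<dots> \<le> a (Suc k)" by (rule loss)
    finally show ?case .
  qed simp
  have "a N * exp (- 2 * suminf h) \<le> a k" if "N \<le> k" for k
  proof -
    have "(\<Sum>j\<in>{N..<k}. h j) \<le> suminf h"
      using h by (intro sum_le_suminf) auto
    then have "a N * exp (- 2 * suminf h) \<le> a N * exp (- 2 * (\<Sum>j\<in>{N..<k}. h j))"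
      using pos[of N] by (intro mult_left_mono) auto
    with decay[OF that] show ?thesis by linarith
  qed
  moreover have "0 < a N * exp (- 2 * suminf h)" using pos[of N] by simp
  ultimately show ?thesis by (auto simp: eventually_sequentially)
qed

lemma continuous_on_positive_right_interval:
  fixes Q :: "real \<Rightarrow> real"
  assumes "continuous_on {a..} Q" and "a \<le> b" and "0 < Q b"
  shows "\<exists>d>0. \<forall>\<tau>\<in>{b..<b + d}. 0 < Q \<tau>"
proof -
  have "\<forall>\<^sub>F \<tau> in at b within {a..}. 0 < Q \<tau>"
    using assms by (intro order_tendstoD) (auto simp: continuous_on_def)
  then obtain d where "0 < d"
    and d: "\<And>\<tau>. \<tau> \<in> {a..} \<Longrightarrow> \<tau> \<noteq> b \<Longrightarrow> dist \<tau> b < d \<Longrightarrow> 0 < Q \<tau>"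
    by (auto simp: eventually_at)
  have "0 < Q \<tau>" if "\<tau> \<in> {b..<b + d}" for \<tau>
    using d[of \<tau>] assms(2,3) that by (cases "\<tau> = b") (auto simp: dist_real_def)
  with \<open>0 < d\<close> show ?thesis by blast
qed

lemma nonneg_prefix_Sup:
  fixes Q :: "real \<Rightarrow> real"
  assumes cont: "continuous_on {a..} Q" and "0 < Q a"
    and finite: "Sup {ereal s | s. a < s \<and> (\<forall>\<tau>\<in>{a..<s}. 0 \<le> Q \<tau>)} \<noteq> \<infinity>"
      (is "Sup ?S \<noteq> \<infinity>")
  obtains b where "Sup ?S = ereal b" and "a < b" and "Q b \<le> 0"
proof -
  obtain d where "0 < d" and d: "\<forall>\<tau>\<in>{a..<a + d}. 0 < Q \<tau>"
    using continuous_on_positive_right_interval[OF cont order_refl \<open>0 < Q a\<close>] by blast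
  then have "ereal (a + d) \<le> Sup ?S"
    by (intro Sup_upper) (auto intro: less_imp_le)
  with finite obtain b where b: "Sup ?S = ereal b" by (cases "Sup ?S") auto
  with \<open>ereal (a + d) \<le> Sup ?S\<close> \<open>0 < d\<close> have "a < b" by simp
  have nonneg: "0 \<le> Q \<tau>" if "a \<le> \<tau>" "\<tau> < b" for \<tau>
  proof -
    have "ereal \<tau> < Sup ?S" using \<open>\<tau> < b\<close> b by simp
    then obtain y where "y \<in> ?S" "ereal \<tau> < y" by (auto simp: less_Sup_iff)
    then show ?thesis using that by auto
  qed
  have "Q b \<le> 0"
  proof (rule ccontr)
    assume "\<not> Q b \<le> 0"
    then have "0 < Q b" by simp
    then obtain e where "0 < e" and e: "\<forall>\<tau>\<in>{b..<b + e}. 0 < Q \<tau>"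
      using continuous_on_positive_right_interval[OF cont less_imp_le[OF \<open>a < b\<close>]] by blast
    then have "ereal (b + e) \<in> ?S"
      using nonneg \<open>a < b\<close> by (auto intro: less_imp_le simp: not_less)
    then have "ereal (b + e) \<le> ereal b" unfolding b[symmetric] by (rule Sup_upper)
    then show False using \<open>0 < e\<close> by simp
  qed
  with b \<open>a < b\<close> show ?thesis by (rule that)
qed

section \<open>Isometric semigroups\<close>

lemma dense_orthogonal_eq_0:
  fixes w :: "'a::real_inner"
  assumes "closure D = UNIV" and "\<And>x. x \<in> D \<Longrightarrow> inner x w = 0"
  shows "w = 0"
proof -
  have "closed {x. inner x w = 0}"
    by (intro closed_Collect_eq continuous_intros)
  then have "closure D \<subseteq> {x. inner x w = 0}"
    using assms(2) by (intro closure_minimal) auto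
  then have "inner w w = 0" using assms(1) by blast
  then show ?thesis by simp
qed

lemma skew_adjoint_inner_self:
  assumes skew: "skew_adjoint D A" and "y \<in> D"
  shows "inner (A y) y = 0"
proof -
  from skew have dense: "closure D = UNIV"
    and adjoint: "adj_domain D A = D" "adj D A y = - A y"
    using \<open>y \<in> D\<close> unfolding skew_adjoint_def by blast+
  have "y \<in> adj_domain D A" using adjoint(1) \<open>y \<in> D\<close> by simp
  then obtain w where w: "\<forall>x\<in>D. inner (A x) y = inner x w"
    unfolding adj_domain_def by blast
  have "\<exists>!w. \<forall>x\<in>D. inner (A x) y = inner x w"
  proof (rule ex1I[of _ w])
    fix w' assume "\<forall>x\<in>D. inner (A x) y = inner x w'"
    then have "w' - w = 0"
      using w by (intro dense_orthogonal_eq_0[OF dense]) (simp add: inner_diff_right)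
    then show "w' = w" by simp
  qed (fact w)
  then have "\<forall>x\<in>D. inner (A x) y = inner x (adj D A y)"
    unfolding adj_def by (rule theI')
  then have "inner (A y) y = - inner y (A y)"
    using \<open>y \<in> D\<close> adjoint(2) by simp
  then show ?thesis by (simp add: inner_commute)
qed

locale strongly_continuous_semigroup =
  fixes T :: "real \<Rightarrow> 'h::real_normed_vector \<Rightarrow> 'h"
  assumes c0_semigroup: "c0_semigroup T"
begin

lemma bounded_linear_T: "0 \<le> t \<Longrightarrow> bounded_linear (T t)"
  using c0_semigroup by (simp add: c0_semigroup_def)

lemma T_0 [simp]: "T 0 x = x"
  using c0_semigroup by (simp add: c0_semigroup_def)

lemma T_add: "0 \<le> s \<Longrightarrow> 0 \<le> t \<Longrightarrow> T (s + t) x = T s (T t x)"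
  using c0_semigroup unfolding c0_semigroup_def by (metis comp_apply)

lemma T_commute: "0 \<le> s \<Longrightarrow> 0 \<le> t \<Longrightarrow> T s (T t x) = T t (T s x)"
  by (metis T_add add.commute)

lemma continuous_on_T: "continuous_on {0..} (\<lambda>t. T t x)"
  using c0_semigroup by (simp add: c0_semigroup_def)

lemma tendsto_T_at_right_0: "((\<lambda>h. T h x) \<longlongrightarrow> x) (at_right 0)"
proof -
  have "((\<lambda>h. T h x) \<longlongrightarrow> T 0 x) (at 0 within {0..})"
    using continuous_on_T[of x] by (simp add: continuous_on_def del: T_0)
  then have "((\<lambda>h. T h x) \<longlongrightarrow> T 0 x) (at_right 0)"
    by (rule tendsto_within_subset) auto
  then show ?thesis by simp
qed

lemma generator_domain_invariant:
  assumes gen: "generator T D A" and "x \<in> D" and "0 \<le> t"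
  shows "T t x \<in> D"
proof -
  note T_t = bounded_linear_T[OF \<open>0 \<le> t\<close>]
  have "((\<lambda>h. T t ((1 / h) *\<^sub>R (T h x - x))) \<longlongrightarrow> T t (A x)) (at_right 0)"
    using gen \<open>x \<in> D\<close> unfolding generator_def by (intro bounded_linear.tendsto[OF T_t]) blast
  moreover have "\<forall>\<^sub>F h in at_right 0.
      T t ((1 / h) *\<^sub>R (T h x - x)) = (1 / h) *\<^sub>R (T h (T t x) - T t x)"
    using eventually_at_right_less[of 0]
    by eventually_elim (simp add: T_commute[OF \<open>0 \<le> t\<close>] linear_simps T_t)
  ultimately have "((\<lambda>h. (1 / h) *\<^sub>R (T h (T t x) - T t x)) \<longlongrightarrow> T t (A x)) (at_right 0)"
    by (rule Lim_transform_eventually)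
  with gen show ?thesis unfolding generator_def by blast
qed

end

lemma skew_adjoint_generator_norm_preserving_on_domain:
  fixes T :: "real \<Rightarrow> 'h::real_inner \<Rightarrow> 'h"
  assumes skew: "skew_adjoint D A" and sg: "c0_semigroup T" and gen: "generator T D A"
    and "x \<in> D" and "0 \<le> b"
  shows "norm (T b x) = norm x"
proof -
  interpret strongly_continuous_semigroup T by (rule strongly_continuous_semigroup.intro[OF sg])
  define g where "g t = (norm (T t x))\<^sup>2" for t
  have "g b = g 0"
  proof (rule right_derivative_zero_imp_constant[OF \<open>0 \<le> b\<close>])
    show "continuous_on {0..b} g" unfolding g_def
      by (intro continuous_intros continuous_on_subset[OF continuous_on_T]) auto
    fix t assume "t \<in> {0..<b}"
    define y where "y = T t x"
    have "y \<in> D"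
      using generator_domain_invariant[OF gen \<open>x \<in> D\<close>] \<open>t \<in> {0..<b}\<close> by (simp add: y_def)
    then have "((\<lambda>h. inner ((1 / h) *\<^sub>R (T h y - y)) (T h y + y)) \<longlongrightarrow> inner (A y) (y + y))
        (at_right 0)"
      using gen unfolding generator_def by (intro tendsto_intros tendsto_T_at_right_0) blast
    moreover have "inner (A y) (y + y) = 0"
      using skew_adjoint_inner_self[OF skew \<open>y \<in> D\<close>] by (simp add: inner_add_right)
    ultimately have lim: "((\<lambda>h. inner ((1 / h) *\<^sub>R (T h y - y)) (T h y + y)) \<longlongrightarrow> 0) (at_right 0)"
      by simp
    have "\<forall>\<^sub>F h in at_right 0. inner ((1 / h) *\<^sub>R (T h y - y)) (T h y + y) = (g (t + h) - g t) / h"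
      using eventually_at_right_less[of 0]
    proof eventually_elim
      case (elim h)
      have "g (t + h) - g t = (norm (T h y))\<^sup>2 - (norm y)\<^sup>2"
        using \<open>t \<in> {0..<b}\<close> elim T_add[of h t x] by (simp add: g_def y_def add.commute)
      also have "\<dots> = inner (T h y - y) (T h y + y)"
        by (simp add: power2_norm_eq_inner inner_diff_left inner_add_left inner_add_right
            inner_diff_right inner_commute)
      finally show ?case by (simp add: divide_inverse mult.commute)
    qed
    with lim show "((\<lambda>h. (g (t + h) - g t) / h) \<longlongrightarrow> 0) (at_right 0)"
      by (rule Lim_transform_eventually)
  qed
  then show ?thesis by (simp add: g_def)
qed

lemma skew_adjoint_generator_norm_preserving:
  fixes T :: "real \<Rightarrow> 'h::real_inner \<Rightarrow> 'h"
  assumes skew: "skew_adjoint D A" and sg: "c0_semigroup T" and gen: "generator T D A"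
    and "0 \<le> b"
  shows "norm (T b x) = norm x"
proof -
  have "bounded_linear (T b)" using sg \<open>0 \<le> b\<close> by (simp add: c0_semigroup_def)
  then have "closed {x. norm (T b x) = norm x}"
    by (intro closed_Collect_eq continuous_intros linear_continuous_on)
  then have "closure D \<subseteq> {x. norm (T b x) = norm x}"
    using skew_adjoint_generator_norm_preserving_on_domain[OF skew sg gen _ \<open>0 \<le> b\<close>]
    by (intro closure_minimal) auto
  moreover have "closure D = UNIV" using skew by (simp add: skew_adjoint_def)
  ultimately show ?thesis by auto
qed

locale isometric_semigroup = strongly_continuous_semigroup T
  for T :: "real \<Rightarrow> 'h::{real_normed_vector, complete_space} \<Rightarrow> 'h" +
  assumes norm_T: "0 \<le> s \<Longrightarrow> norm (T s x) = norm x"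
begin

definition orbit_integral :: "real \<Rightarrow> 'h \<Rightarrow> 'h" where
  "orbit_integral t y = integral {0..t} (\<lambda>s. T s y)"

definition flow :: "'h \<Rightarrow> 'h \<Rightarrow> real \<Rightarrow> 'h" where
  "flow f x t = T t x + orbit_integral t f"

lemma orbit_integrable: "0 \<le> a \<Longrightarrow> (\<lambda>s. T s y) integrable_on {a..b}"
  by (intro integrable_continuous_interval_complete continuous_on_subset[OF continuous_on_T]) auto

lemma has_integral_orbit_integral: "((\<lambda>s. T s y) has_integral orbit_integral t y) {0..t}"
  unfolding orbit_integral_def by (rule integrable_integral[OF orbit_integrable]) simp

lemma orbit_integral_add:
  assumes "0 \<le> a" "0 \<le> b"
  shows "orbit_integral (a + b) y = orbit_integral a y + T a (orbit_integral b y)"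
proof -
  have "integral {a..a + b} (\<lambda>s. T s y) = integral {0..b} (\<lambda>s. T (s + a) y)"
    using integral_shift_real_ivl[where a=a and b="a + b" and c=a and f="\<lambda>s. T s y"] by simp
  also have "\<dots> = integral {0..b} (T a \<circ> (\<lambda>s. T s y))"
    using assms by (intro integral_cong) (simp add: T_add T_commute add.commute)
  also have "\<dots> = T a (orbit_integral b y)"
    unfolding orbit_integral_def
    by (rule integral_linear[OF orbit_integrable bounded_linear_T[OF \<open>0 \<le> a\<close>]]) simp
  finally have "((\<lambda>s. T s y) has_integral T a (orbit_integral b y)) {a..a + b}"
    using orbit_integrable[OF \<open>0 \<le> a\<close>] by (metis integrable_integral)
  with has_integral_orbit_integral
  have "((\<lambda>s. T s y) has_integral orbit_integral a y + T a (orbit_integral b y)) {0..a + b}"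
    by (rule has_integral_combine_complete[rotated 2]) (use assms in auto)
  with has_integral_orbit_integral show ?thesis by (rule has_integral_unique)
qed

lemma orbit_integral_diff: "orbit_integral t (x - y) = orbit_integral t x - orbit_integral t y"
proof -
  have "((\<lambda>s. T s (x - y)) has_integral orbit_integral t x - orbit_integral t y) {0..t}"
  proof (subst has_integral_cong)
    show "T s (x - y) = T s x - T s y" if "s \<in> {0..t}" for s
      using that by (simp add: linear_simps bounded_linear_T)
    show "((\<lambda>s. T s x - T s y) has_integral orbit_integral t x - orbit_integral t y) {0..t}"
      by (intro has_integral_diff has_integral_orbit_integral)
  qed
  with has_integral_orbit_integral show ?thesis by (rule has_integral_unique)
qed

lemma norm_orbit_integral_le: "0 \<le> t \<Longrightarrow> norm (orbit_integral t y) \<le> t * norm y"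
  using has_integral_bound[of "norm y" "\<lambda>s. T s y" "orbit_integral t y" 0 t] has_integral_orbit_integral
  by (simp add: norm_T mult.commute)

lemma orbit_integral_lipschitz: "(norm y)-lipschitz_on {0..} (\<lambda>t. orbit_integral t y)"
proof (rule lipschitz_onI)
  have *: "dist (orbit_integral s y) (orbit_integral t y) \<le> norm y * dist s t" if "0 \<le> s" "s \<le> t" for s t
  proof -
    have "orbit_integral t y = orbit_integral s y + T s (orbit_integral (t - s) y)"
      using orbit_integral_add[of s "t - s" y] that by simp
    then have "dist (orbit_integral s y) (orbit_integral t y) = norm (orbit_integral (t - s) y)"
      using that by (simp add: dist_norm norm_T)
    also have "\<dots> \<le> norm y * dist s t"
      using norm_orbit_integral_le[of "t - s" y] that by (simp add: dist_real_def mult.commute)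
    finally show ?thesis .
  qed
  then show "dist (orbit_integral s y) (orbit_integral t y) \<le> norm y * dist s t"
    if "s \<in> {0..}" "t \<in> {0..}" for s t
    using that *[of s t] *[of t s] by (cases "s \<le> t") (auto simp: dist_commute)
qed simp

lemma continuous_on_orbit_integral: "continuous_on {0..} (\<lambda>t. orbit_integral t y)"
  by (rule lipschitz_on_continuous_on[OF orbit_integral_lipschitz])

lemma flow_0 [simp]: "flow f x 0 = x"
  by (simp add: flow_def orbit_integral_def)

lemma flow_add:
  assumes "0 \<le> s" "0 \<le> t"
  shows "flow f x (s + t) = flow f (flow f x s) t"
proof -
  have "flow f x (t + s) = flow f (flow f x s) t"
    using assms by (simp add: flow_def T_add orbit_integral_add linear_simps bounded_linear_T)
  then show ?thesis by (simp add: add.commute)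
qed

lemma flow_diff_state: "0 \<le> t \<Longrightarrow> flow f y t - flow f x t = T t (y - x)"
  by (simp add: flow_def linear_simps bounded_linear_T)

lemma flow_diff_input: "flow f x t - flow g x t = orbit_integral t (f - g)"
  by (simp add: flow_def orbit_integral_diff)

lemma flow_zero: "0 \<le> t \<Longrightarrow> flow 0 0 t = 0"
  using orbit_integral_diff[of t 0 0] by (simp add: flow_def linear_simps bounded_linear_T)

lemma continuous_on_flow: "continuous_on {0..} (flow f x)"
  unfolding flow_def by (intro continuous_intros continuous_on_T continuous_on_orbit_integral)

lemma duhamel_eq_flow:
  assumes "a \<le> \<tau>"
  shows "duhamel T f a x \<tau> = flow f x (\<tau> - a)"
proof -
  have "integral {a..\<tau>} (\<lambda>r. T (\<tau> - r) f)
      = integral {a - \<tau>..\<tau> - \<tau>} (\<lambda>r. T (\<tau> - (r + \<tau>)) f)"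
    using integral_shift_real_ivl[of a \<tau> \<tau> "\<lambda>r. T (\<tau> - r) f"] by simp
  also have "\<dots> = integral {- (\<tau> - a)..- 0} (\<lambda>r. T (- r) f)" by simp
  also have "\<dots> = orbit_integral (\<tau> - a) f"
    using Henstock_Kurzweil_Integration.integral_reflect_real[where a=0 and b="\<tau> - a"]
    by (simp add: orbit_integral_def)
  finally show ?thesis by (simp add: duhamel_def flow_def)
qed

lemma norm_flow_ge: "0 \<le> t \<Longrightarrow> norm x - t * norm f \<le> norm (flow f x t)"
  using norm_triangle_ineq4[of "flow f x t" "orbit_integral t f"] norm_orbit_integral_le[of t f]
  by (simp add: flow_def norm_T)

lemma generator_domain_lipschitz:
  assumes gen: "generator T D A" and "x \<in> D"
  shows "\<exists>M. \<forall>\<epsilon>\<ge>0. norm (T \<epsilon> x - x) \<le> M * \<epsilon>"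
proof -
  have "((\<lambda>h. (1 / h) *\<^sub>R (T h x - x)) \<longlongrightarrow> A x) (at_right 0)"
    using gen \<open>x \<in> D\<close> unfolding generator_def by blast
  from tendsto_norm[OF this]
  have "\<forall>\<^sub>F h in at_right 0. norm ((1 / h) *\<^sub>R (T h x - x)) < norm (A x) + 1"
    by (rule order_tendstoD) simp
  then obtain d where "0 < d"
    and d: "\<And>h. 0 < h \<Longrightarrow> h < d \<Longrightarrow> norm ((1 / h) *\<^sub>R (T h x - x)) < norm (A x) + 1"
    by (auto simp: eventually_at_right_field)
  define M where "M = norm (A x) + 1 + 2 * norm x / d"
  have "norm (T \<epsilon> x - x) \<le> M * \<epsilon>" if "0 \<le> \<epsilon>" for \<epsilon>
  proof (cases "\<epsilon> < d")
    case True
    show ?thesis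
    proof (cases "\<epsilon> = 0")
      case False
      then have "norm (T \<epsilon> x - x) = \<epsilon> * norm ((1 / \<epsilon>) *\<^sub>R (T \<epsilon> x - x))"
        using that by simp
      also have "\<dots> \<le> \<epsilon> * (norm (A x) + 1)"
        using d[of \<epsilon>] True False that by (intro mult_left_mono) auto
      also have "\<dots> \<le> M * \<epsilon>" using that \<open>0 < d\<close> by (simp add: M_def algebra_simps)
      finally show ?thesis .
    qed simp
  next
    case False
    have "norm (T \<epsilon> x - x) \<le> 2 * norm x"
      using norm_triangle_ineq4[of "T \<epsilon> x" x] that by (simp add: norm_T)
    also have "\<dots> \<le> (2 * norm x / d) * \<epsilon>"
      using False \<open>0 < d\<close> by (simp add: field_simps mult_right_mono)
    also have "\<dots> \<le> M * \<epsilon>" using that by (intro mult_right_mono) (auto simp: M_def)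
    finally show ?thesis .
  qed
  then show ?thesis by blast
qed

lemma flow_lipschitz_at_0_if_domain:
  assumes gen: "generator T D A" and "x \<in> D"
  shows "\<exists>c. \<forall>\<epsilon>\<ge>0. norm (flow f x \<epsilon> - x) \<le> c * \<epsilon>"
proof -
  obtain M where M: "\<And>\<epsilon>. 0 \<le> \<epsilon> \<Longrightarrow> norm (T \<epsilon> x - x) \<le> M * \<epsilon>"
    using generator_domain_lipschitz[OF assms] by blast
  have "norm (flow f x \<epsilon> - x) \<le> (M + norm f) * \<epsilon>" if "0 \<le> \<epsilon>" for \<epsilon>
    using norm_triangle_ineq[of "T \<epsilon> x - x" "orbit_integral \<epsilon> f"]
      M[OF that] norm_orbit_integral_le[OF that, of f]
    by (simp add: flow_def algebra_simps)
  then show ?thesis by blast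
qed

section \<open>Sampled flows with summable sampling intervals\<close>

lemma flow_restart_lipschitz:
  assumes F: "bounded_linear F" "\<And>v. norm (F v) \<le> L * norm v" "0 \<le> L"
    and lip: "\<And>\<epsilon>. 0 \<le> \<epsilon> \<Longrightarrow> norm (flow (F x) x \<epsilon> - x) \<le> c * \<epsilon>"
    and y: "y = flow (F x) x h" and "0 \<le> h" "0 \<le> \<epsilon>"
  shows "norm (flow (F y) y \<epsilon> - y) \<le> c * (1 + L * h) * \<epsilon>"
proof -
  have "flow (F x) y \<epsilon> - y = flow (F x) (flow (F x) x \<epsilon>) h - flow (F x) x h"
    using flow_add[of \<epsilon> h] flow_add[of h \<epsilon>] \<open>0 \<le> h\<close> \<open>0 \<le> \<epsilon>\<close> by (simp add: y add.commute)
  also have "\<dots> = T h (flow (F x) x \<epsilon> - x)"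
    by (rule flow_diff_state[OF \<open>0 \<le> h\<close>])
  finally have "norm (flow (F x) y \<epsilon> - y) \<le> c * \<epsilon>"
    using lip[OF \<open>0 \<le> \<epsilon>\<close>] \<open>0 \<le> h\<close> by (simp add: norm_T)
  moreover have "norm (orbit_integral \<epsilon> (F y - F x)) \<le> \<epsilon> * (L * (c * h))"
  proof -
    have "norm (y - x) \<le> c * h" using lip[OF \<open>0 \<le> h\<close>] by (simp add: y)
    then have "norm (F y - F x) \<le> L * (c * h)"
      using F by (metis linear_simps(2) mult_left_mono order_trans)
    then show ?thesis
      using norm_orbit_integral_le[OF \<open>0 \<le> \<epsilon>\<close>] \<open>0 \<le> \<epsilon>\<close> by (meson mult_left_mono order_trans)
  qed
  moreover have "flow (F y) y \<epsilon> - y = (flow (F x) y \<epsilon> - y) + orbit_integral \<epsilon> (F y - F x)"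
    using flow_diff_input[of "F y" y \<epsilon> "F x"] by (simp add: algebra_simps)
  ultimately show ?thesis
    using norm_triangle_ineq[of "flow (F x) y \<epsilon> - y" "orbit_integral \<epsilon> (F y - F x)"]
    by (simp add: algebra_simps)
qed


lemma sampled_flow_increments_bounded:
  assumes F: "bounded_linear F" "\<And>v. norm (F v) \<le> L * norm v" "0 \<le> L"
    and h: "\<And>k. 0 \<le> h k" "summable h"
    and z: "\<And>k. z (Suc k) = flow (F (z k)) (z k) (h k)"
    and start: "\<exists>c. \<forall>\<epsilon>\<ge>0. norm (flow (F (z 0)) (z 0) \<epsilon> - z 0) \<le> c * \<epsilon>"
  shows "\<exists>M. \<forall>k. norm (z (Suc k) - z k) \<le> M * h k"
proof -
  obtain c where "\<forall>\<epsilon>\<ge>0. norm (flow (F (z 0)) (z 0) \<epsilon> - z 0) \<le> c * \<epsilon>"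
    using start by blast
  then have start': "norm (flow (F (z 0)) (z 0) \<epsilon> - z 0) \<le> max c 0 * \<epsilon>" if "0 \<le> \<epsilon>" for \<epsilon>
    using that by (meson max.cobounded1 mult_right_mono order_trans)
  have lip: "norm (flow (F (z k)) (z k) \<epsilon> - z k) \<le> max c 0 * exp (L * (\<Sum>j<k. h j)) * \<epsilon>"
    if "0 \<le> \<epsilon>" for k \<epsilon>
    using that
  proof (induction k arbitrary: \<epsilon>)
    case (Suc k)
    have "norm (flow (F (z (Suc k))) (z (Suc k)) \<epsilon> - z (Suc k))
        \<le> max c 0 * exp (L * (\<Sum>j<k. h j)) * (1 + L * h k) * \<epsilon>"
      by (rule flow_restart_lipschitz[OF F Suc.IH z h(1) Suc.prems])
    also have "\<dots> \<le> max c 0 * exp (L * (\<Sum>j<k. h j)) * exp (L * h k) * \<epsilon>"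
      using Suc.prems by (intro mult_left_mono mult_right_mono exp_ge_add_one_self) auto
    also have "\<dots> = max c 0 * exp (L * (\<Sum>j<Suc k. h j)) * \<epsilon>"
      by (simp add: distrib_left exp_add)
    finally show ?case .
  qed (simp add: start')
  have "norm (z (Suc k) - z k) \<le> max c 0 * exp (L * suminf h) * h k" for k
  proof -
    have "(\<Sum>j<k. h j) \<le> suminf h" using h by (intro sum_le_suminf) auto
    then have "max c 0 * exp (L * (\<Sum>j<k. h j)) * h k \<le> max c 0 * exp (L * suminf h) * h k"
      using F(3) h(1) by (intro mult_left_mono mult_right_mono) (auto intro: mult_left_mono)
    moreover have "norm (z (Suc k) - z k) \<le> max c 0 * exp (L * (\<Sum>j<k. h j)) * h k"
      using lip[of "h k" k] h(1)[of k] by (simp add: z)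
    ultimately show ?thesis by linarith
  qed
  then show ?thesis by blast
qed

lemma sampled_flow_intervals_not_summable:
  fixes C :: "'h \<Rightarrow> 'y::real_normed_vector"
  assumes F: "bounded_linear F" and C: "bounded_linear C" and "0 < \<gamma>"
    and h: "\<And>k. 0 \<le> h k"
    and z: "\<And>k. z (Suc k) = flow (F (z k)) (z k) (h k)"
    and nonzero: "\<And>k. z k \<noteq> 0"
    and trigger: "\<And>k. \<gamma> * norm (z (Suc k)) \<le> norm (C (z (Suc k)) - C (z k))"
    and start: "\<exists>c. \<forall>\<epsilon>\<ge>0. norm (flow (F (z 0)) (z 0) \<epsilon> - z 0) \<le> c * \<epsilon>"
  shows "\<not> summable h"
proof
  assume "summable h"
  obtain L where "0 < L" and L: "\<And>v. norm (F v) \<le> L * norm v"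
    using bounded_linear.pos_bounded[OF F] by (auto simp: mult.commute)
  obtain K where "0 < K" and K: "\<And>v. norm (C v) \<le> K * norm v"
    using bounded_linear.pos_bounded[OF C] by (auto simp: mult.commute)
  obtain M where M: "\<And>k. norm (z (Suc k) - z k) \<le> M * h k"
    using sampled_flow_increments_bounded[OF F L _ h \<open>summable h\<close> z start] \<open>0 < L\<close> by auto
  have "\<exists>m>0. \<forall>\<^sub>F k in sequentially. m \<le> norm (z k)"
  proof (rule eventually_bounded_below_if_summable_losses)
    show "norm (z k) * (1 - L * h k) \<le> norm (z (Suc k))" for k
    proof -
      have "h k * norm (F (z k)) \<le> h k * (L * norm (z k))" using L h(1) by (rule mult_left_mono)
      then show ?thesis using norm_flow_ge[OF h(1)[of k], of "z k" "F (z k)"] by (simp add: z algebra_simps)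
    qed
  qed (use nonzero h \<open>0 < L\<close> \<open>summable h\<close> in \<open>auto intro: summable_mult\<close>)
  then obtain m N where "0 < m" and m: "\<And>k. N \<le> k \<Longrightarrow> m \<le> norm (z k)"
    by (auto simp: eventually_sequentially)
  have lower: "\<gamma> * m \<le> K * M * h k" if "N \<le> k" for k
  proof -
    have "\<gamma> * m \<le> \<gamma> * norm (z (Suc k))" using m[of "Suc k"] that \<open>0 < \<gamma>\<close> by simp
    also have "\<dots> \<le> norm (C (z (Suc k) - z k))" using trigger C by (simp add: linear_simps)
    also have "\<dots> \<le> K * (M * h k)"
      using K M \<open>0 < K\<close> by (meson mult_left_mono order_trans less_imp_le)
    finally show ?thesis by (simp add: mult.assoc)
  qed
  have "(\<lambda>k. K * M * h k) \<longlonglongrightarrow> 0"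
    using tendsto_mult_right_zero[OF summable_LIMSEQ_zero[OF \<open>summable h\<close>]] .
  then have "\<forall>\<^sub>F k in sequentially. K * M * h k < \<gamma> * m"
    using \<open>0 < \<gamma>\<close> \<open>0 < m\<close> by (intro order_tendstoD) auto
  then obtain N' where upper: "\<And>k. N' \<le> k \<Longrightarrow> K * M * h k < \<gamma> * m"
    by (auto simp: eventually_sequentially)
  from lower[of "max N N'"] upper[of "max N N'"] show False by simp
qed

section \<open>The event-triggered closed loop\<close>

lemma next_trigger_time:
  fixes C :: "'h \<Rightarrow> 'y::real_normed_vector"
  assumes C: "bounded_linear C" and "0 < \<gamma>" and input: "x = 0 \<Longrightarrow> f = 0" and t0: "t0 = ereal a"
    and t1: "t1 = Sup {ereal s | s. t0 < ereal s \<and> (\<forall>\<tau>. t0 \<le> ereal \<tau> \<and> \<tau> < s \<longrightarrow>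
        (norm (C (duhamel T f a x \<tau>) - C x))\<^sup>2 \<le> \<gamma>\<^sup>2 * (norm (duhamel T f a x \<tau>))\<^sup>2)}"
      (is "t1 = Sup ?S") and finite: "t1 \<noteq> \<infinity>"
  obtains b where "t1 = ereal b" and "a < b" and "x \<noteq> 0"
    and "\<gamma>\<^sup>2 * (norm (duhamel T f a x b))\<^sup>2 \<le> (norm (C (duhamel T f a x b) - C x))\<^sup>2"
proof -
  define Q where
    "Q \<tau> = \<gamma>\<^sup>2 * (norm (flow f x (\<tau> - a)))\<^sup>2 - (norm (C (flow f x (\<tau> - a)) - C x))\<^sup>2" for \<tau>
  have "(\<forall>\<tau>. t0 \<le> ereal \<tau> \<and> \<tau> < s \<longrightarrow>
      (norm (C (duhamel T f a x \<tau>) - C x))\<^sup>2 \<le> \<gamma>\<^sup>2 * (norm (duhamel T f a x \<tau>))\<^sup>2)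
      \<longleftrightarrow> (\<forall>\<tau>\<in>{a..<s}. 0 \<le> Q \<tau>)" for s
    by (auto simp: t0 Q_def duhamel_eq_flow)
  then have S_eq: "?S = {ereal s | s. a < s \<and> (\<forall>\<tau>\<in>{a..<s}. 0 \<le> Q \<tau>)}"
    by (simp add: t0)
  have "continuous_on {a..} (\<lambda>\<tau>. flow f x (\<tau> - a))"
    by (rule continuous_on_compose2[OF continuous_on_flow]) (auto intro!: continuous_intros)
  then have "continuous_on {a..} Q" unfolding Q_def
    by (intro continuous_intros continuous_on_compose2[OF linear_continuous_on[OF C]]) auto
  have "x \<noteq> 0"
  proof
    assume "x = 0"
    then have "Q \<tau> = 0" if "a \<le> \<tau>" for \<tau>
      using input that by (simp add: Q_def flow_zero linear_simps C)
    then have "ereal (max s (a + 1)) \<in> ?S" for s unfolding S_eq by (intro CollectI exI[of _ "max s (a + 1)"]) auto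
    then have "ereal s \<le> Sup ?S" for s
      by (meson Sup_upper ereal_less_eq(3) max.cobounded1 order_trans)
    then show False using finite ereal_top t1 by blast
  qed
  then have "0 < Q a" using \<open>0 < \<gamma>\<close> by (simp add: Q_def)
  with \<open>continuous_on {a..} Q\<close> obtain b where "Sup ?S = ereal b" "a < b" "Q b \<le> 0"
    using finite unfolding t1 S_eq by (rule nonneg_prefix_Sup)
  then show ?thesis
    using that[of b] \<open>x \<noteq> 0\<close> by (simp add: t1 Q_def duhamel_eq_flow)
qed

end

locale event_triggered_system = isometric_semigroup T
  for T :: "real \<Rightarrow> 'h::{real_normed_vector, complete_space} \<Rightarrow> 'h" +
  fixes F :: "'h \<Rightarrow> 'h" and C :: "'h \<Rightarrow> 'y::real_normed_vector" and \<gamma> :: real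
    and t :: "nat \<Rightarrow> ereal" and z :: "real \<Rightarrow> 'h"
  assumes F: "bounded_linear F" and C: "bounded_linear C" and gamma: "0 < \<gamma>"
    and t0: "t 0 = 0"
    and trig: "\<And>k. t k < \<infinity> \<Longrightarrow>
       t (Suc k) = Sup {ereal s | s. ereal s > t k \<and>
         (\<forall>\<tau>. t k \<le> ereal \<tau> \<and> \<tau> < s \<longrightarrow>
            (norm (C (duhamel T (F (z (real_of_ereal (t k)))) (real_of_ereal (t k))
                        (z (real_of_ereal (t k))) \<tau>) - C (z (real_of_ereal (t k)))))\<^sup>2
            \<le> \<gamma>\<^sup>2 * (norm (duhamel T (F (z (real_of_ereal (t k)))) (real_of_ereal (t k))
                        (z (real_of_ereal (t k))) \<tau>))\<^sup>2)}"
    and sol: "\<And>k \<tau>. t k \<le> ereal \<tau> \<Longrightarrow> ereal \<tau> < t (Suc k) \<Longrightarrow> ereal \<tau> < Tstar t \<Longrightarrow>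
       z \<tau> = duhamel T (F (z (real_of_ereal (t k)))) (real_of_ereal (t k))
                (z (real_of_ereal (t k))) \<tau>"
    and cont: "continuous_on {\<tau>. 0 \<le> \<tau> \<and> ereal \<tau> < Tstar t} z"
begin

abbreviation t_real :: "nat \<Rightarrow> real" where
  "t_real k \<equiv> real_of_ereal (t k)"

context
  assumes Tstar_finite: "Tstar t \<noteq> \<infinity>"
begin

lemma t_finite: "t k \<noteq> \<infinity>"
proof
  assume "t k = \<infinity>"
  then have "Tstar t = \<infinity>" by (auto simp: Tstar_def)
  with Tstar_finite show False ..
qed

lemma trigger_step:
  assumes "t k = ereal (t_real k)"
  shows "t (Suc k) = ereal (t_real (Suc k))" and "t_real k < t_real (Suc k)"
    and "z (t_real k) \<noteq> 0"
    and "\<gamma>\<^sup>2 * (norm (duhamel T (F (z (t_real k))) (t_real k) (z (t_real k)) (t_real (Suc k))))\<^sup>2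
      \<le> (norm (C (duhamel T (F (z (t_real k))) (t_real k) (z (t_real k)) (t_real (Suc k)))
            - C (z (t_real k))))\<^sup>2"
proof -
  have "t k < \<infinity>" by (subst assms) simp
  have input: "z (t_real k) = 0 \<Longrightarrow> F (z (t_real k)) = 0"
    using F by (simp add: linear_simps)
  obtain b where "t (Suc k) = ereal b" and "t_real k < b" and "z (t_real k) \<noteq> 0"
    and "\<gamma>\<^sup>2 * (norm (duhamel T (F (z (t_real k))) (t_real k) (z (t_real k)) b))\<^sup>2
      \<le> (norm (C (duhamel T (F (z (t_real k))) (t_real k) (z (t_real k)) b) - C (z (t_real k))))\<^sup>2"
    by (rule next_trigger_time[OF C gamma input assms trig[OF \<open>t k < \<infinity>\<close>] t_finite])
  then show "t (Suc k) = ereal (t_real (Suc k))" and "t_real k < t_real (Suc k)"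
    and "z (t_real k) \<noteq> 0"
    and "\<gamma>\<^sup>2 * (norm (duhamel T (F (z (t_real k))) (t_real k) (z (t_real k)) (t_real (Suc k))))\<^sup>2
      \<le> (norm (C (duhamel T (F (z (t_real k))) (t_real k) (z (t_real k)) (t_real (Suc k)))
            - C (z (t_real k))))\<^sup>2"
    by simp_all
qed


lemma t_ereal: "t k = ereal (t_real k)"
proof (induction k)
  case 0
  show ?case using t0 by (simp add: zero_ereal_def)
next
  case (Suc k)
  show ?case by (rule trigger_step(1)[OF Suc.IH])
qed

lemma t_real_less: "t_real k < t_real (Suc k)"
  using trigger_step(2)[OF t_ereal] .

lemma z_sample_nonzero: "z (t_real k) \<noteq> 0"
  using trigger_step(3)[OF t_ereal] .



lemma t_real_nonneg: "0 \<le> t_real k"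
proof (induction k)
  case 0
  show ?case using t0 by simp
next
  case (Suc k)
  then show ?case using t_real_less[of k] by linarith
qed

lemma Tstar_bounds_t_real:
  obtains L where "Tstar t = ereal L" and "\<And>k. t_real k < L"
proof -
  have "incseq t"
  proof (rule incseq_SucI)
    show "t k \<le> t (Suc k)" for k
      using t_real_less[of k] by (subst (1 2) t_ereal) simp
  qed
  have "Tstar t = limsup t" using t_finite by (simp add: Tstar_def)
  also have "\<dots> = (SUP k. t k)"
    by (rule lim_imp_Limsup[OF trivial_limit_sequentially LIMSEQ_SUP[OF \<open>incseq t\<close>]])
  finally have upper: "t k \<le> Tstar t" for k by (simp add: SUP_upper)
  have "Tstar t \<noteq> - \<infinity>" using upper[of 0] t0 by auto
  with Tstar_finite obtain L where L: "Tstar t = ereal L" by (cases "Tstar t") auto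
  have "t_real k < L" for k
    using t_real_less[of k] upper[of "Suc k"] L by (subst (asm) t_ereal) simp
  with L show ?thesis by (rule that)
qed


lemma z_at_trigger:
  "z (t_real (Suc k)) = flow (F (z (t_real k))) (z (t_real k)) (t_real (Suc k) - t_real k)"
proof -
  define a where "a = t_real k"
  define b where "b = t_real (Suc k)"
  define \<phi> where "\<phi> \<tau> = flow (F (z a)) (z a) (\<tau> - a)" for \<tau>
  obtain L where L: "Tstar t = ereal L" and "\<And>k. t_real k < L" using Tstar_bounds_t_real by blast
  then have "a < b" "0 \<le> a" "b < L"
    using t_real_less t_real_nonneg by (auto simp: a_def b_def)
  have "\<forall>\<^sub>F \<tau> in at b within {a<..<b}. z \<tau> = \<phi> \<tau>"
    unfolding eventually_at_filter
  proof (intro always_eventually allI impI)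
    fix \<tau> assume "\<tau> \<noteq> b" "\<tau> \<in> {a<..<b}"
    then have "t k \<le> ereal \<tau>" "ereal \<tau> < t (Suc k)"
      by (subst t_ereal, simp add: a_def b_def)+
    moreover have "ereal \<tau> < Tstar t" using \<open>\<tau> \<in> {a<..<b}\<close> \<open>b < L\<close> by (simp add: L)
    ultimately show "z \<tau> = \<phi> \<tau>"
      using \<open>\<tau> \<in> {a<..<b}\<close> by (simp add: sol \<phi>_def duhamel_eq_flow a_def)
  qed
  moreover have "(z \<longlongrightarrow> z b) (at b within {a<..<b})"
  proof (rule tendsto_within_subset)
    show "(z \<longlongrightarrow> z b) (at b within {\<tau>. 0 \<le> \<tau> \<and> ereal \<tau> < Tstar t})"
      using cont \<open>a < b\<close> \<open>0 \<le> a\<close> \<open>b < L\<close> by (simp add: continuous_on_def L)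
    show "{a<..<b} \<subseteq> {\<tau>. 0 \<le> \<tau> \<and> ereal \<tau> < Tstar t}"
      using \<open>0 \<le> a\<close> \<open>b < L\<close> by (auto simp: L)
  qed
  ultimately have "(\<phi> \<longlongrightarrow> z b) (at b within {a<..<b})"
    by (rule Lim_transform_eventually[rotated])
  moreover have "(\<phi> \<longlongrightarrow> \<phi> b) (at b within {a<..<b})"
  proof -
    have "continuous_on {a..} \<phi>"
      unfolding \<phi>_def by (rule continuous_on_compose2[OF continuous_on_flow]) (auto intro!: continuous_intros)
    then have "(\<phi> \<longlongrightarrow> \<phi> b) (at b within {a..})"
      using \<open>a < b\<close> by (simp add: continuous_on_def)
    then show ?thesis by (rule tendsto_within_subset) auto
  qed
  moreover have "at b within {a<..<b} \<noteq> bot"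
    using islimpt_greaterThanLessThan2[OF \<open>a < b\<close>] by (simp add: trivial_limit_within)
  ultimately show ?thesis
    using tendsto_unique by (fastforce simp: \<phi>_def a_def b_def)
qed


lemma trigger_violated:
  "\<gamma> * norm (z (t_real (Suc k))) \<le> norm (C (z (t_real (Suc k))) - C (z (t_real k)))"
proof -
  have "(\<gamma> * norm (z (t_real (Suc k))))\<^sup>2 \<le> (norm (C (z (t_real (Suc k))) - C (z (t_real k))))\<^sup>2"
    using trigger_step(4)[OF t_ereal[of k]] less_imp_le[OF t_real_less[of k]]
    by (simp add: duhamel_eq_flow z_at_trigger power_mult_distrib)
  then show ?thesis by (rule power2_le_imp_le) simp
qed

end

lemma Tstar_infinite:
  assumes "\<exists>c. \<forall>\<epsilon>\<ge>0. norm (flow (F (z 0)) (z 0) \<epsilon> - z 0) \<le> c * \<epsilon>"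
  shows "Tstar t = \<infinity>"
proof (rule ccontr)
  assume finite: "Tstar t \<noteq> \<infinity>"
  obtain L where "\<And>k. t_real k < L" using Tstar_bounds_t_real[OF finite] by blast
  define h where "h k = t_real (Suc k) - t_real k" for k
  have "0 \<le> h k" for k using t_real_less[OF finite, of k] by (simp add: h_def)
  have "t_real 0 = 0" using t0 by simp
  have "\<not> summable h"
  proof (rule sampled_flow_intervals_not_summable[OF F C gamma, where z = "\<lambda>k. z (t_real k)"])
    show "z (t_real (Suc k)) = flow (F (z (t_real k))) (z (t_real k)) (h k)" for k
      unfolding h_def by (rule z_at_trigger[OF finite])
  qed (use \<open>\<And>k. 0 \<le> h k\<close> z_sample_nonzero[OF finite] trigger_violated[OF finite] assms
      \<open>t_real 0 = 0\<close> in auto)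
  moreover have "summable h"
  proof (rule summableI_nonneg_bounded)
    show "(\<Sum>j<k. h j) \<le> L" for k
      using sum_lessThan_telescope[of t_real k] \<open>t_real 0 = 0\<close> \<open>t_real k < L\<close> by (simp add: h_def)
  qed (rule \<open>0 \<le> h _\<close>)
  ultimately show False by contradiction
qed

end

theorem theorem4:
  fixes T :: "real \<Rightarrow> 'h::{real_inner, complete_space} \<Rightarrow> 'h"
    and D :: "'h set" and A :: "'h \<Rightarrow> 'h"
    and B :: "'u::{real_inner, complete_space} \<Rightarrow> 'h"
    and C :: "'h \<Rightarrow> 'y::{real_inner, complete_space}"
    and K :: "'y \<Rightarrow> 'u"
    and \<gamma> :: real and z0 :: 'h
    and z :: "real \<Rightarrow> 'h" and t :: "nat \<Rightarrow> ereal"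
  assumes skew: "skew_adjoint D A"
    and sg: "c0_semigroup T" and gen: "generator T D A"
    and B: "bounded_linear B" and C: "bounded_linear C" and K: "bounded_linear K"
    and gamma: "\<gamma> > 0"
    and t0: "t 0 = 0"
    and trig: "\<And>k. t k < \<infinity> \<Longrightarrow>
       t (Suc k) = Sup {ereal s | s. ereal s > t k \<and>
         (\<forall>\<tau>. t k \<le> ereal \<tau> \<and> \<tau> < s \<longrightarrow>
            (norm (C (duhamel T (B (K (C (z (real_of_ereal (t k)))))) (real_of_ereal (t k))
                        (z (real_of_ereal (t k))) \<tau>) - C (z (real_of_ereal (t k)))))\<^sup>2
            \<le> \<gamma>\<^sup>2 * (norm (duhamel T (B (K (C (z (real_of_ereal (t k)))))) (real_of_ereal (t k))
                        (z (real_of_ereal (t k))) \<tau>))\<^sup>2)}"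
    and stop: "\<And>k. t k = \<infinity> \<Longrightarrow> t (Suc k) = \<infinity>"
    and init: "z 0 = z0"
    and sol: "\<And>k \<tau>. t k \<le> ereal \<tau> \<Longrightarrow> ereal \<tau> < t (Suc k) \<Longrightarrow> ereal \<tau> < Tstar t \<Longrightarrow>
       z \<tau> = duhamel T (B (K (C (z (real_of_ereal (t k)))))) (real_of_ereal (t k))
                (z (real_of_ereal (t k))) \<tau>"
    and cont: "continuous_on {\<tau>. 0 \<le> \<tau> \<and> ereal \<tau> < Tstar t} z"
    and z0D: "z0 \<in> D"
  shows "Tstar t = \<infinity>"
proof -
  interpret isometric_semigroup T
    using sg skew_adjoint_generator_norm_preserving[OF skew sg gen]
    by (intro isometric_semigroup.intro strongly_continuous_semigroup.intro
        isometric_semigroup_axioms.intro)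
  interpret event_triggered_system T "\<lambda>x. B (K (C x))" C \<gamma> t z
    by (rule event_triggered_system.intro[OF isometric_semigroup_axioms
          event_triggered_system_axioms.intro])
      (fact bounded_linear_compose[OF B bounded_linear_compose[OF K C]] C gamma t0 trig sol cont)+
  show ?thesis
    using Tstar_infinite flow_lipschitz_at_0_if_domain[OF gen z0D] init by blast
qed

end
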